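(* For every $j\in\mathbb{N}$, every $n\in\mathbb{N}$ and every $M\in\mathbb{R}^{n\times n}$, $$\|\mathcal{U}(M)\|_{S_{2^j}}\le 2^{j-1}\|M\|_{S_{2^j}}.$$
   Context: For $M\in\mathbb{R}^{n\times n}$ with singular values $\sigma_1(M)\ge\dots\ge\sigma_n(M)$, the Schatten norm is $\|M\|_{S_p}:=(\sum_{m=1}^n\sigma_m(M)^p)^{1/p}$ for $1\le p<\infty$ and $\|M\|_{S_\infty}:=\sigma_1(M)$ (spectral norm). The upper triangular truncation is $\mathcal{U}(M)_{ij}:=M_{ij}$ if $i\le j$ and $0$ if $i>j$. *)

theory Defs
  imports "Jordan_Normal_Form.Matrix" "Jordan_Normal_Form.Char_Poly"
begin

definition singular_values :: "real mat \<Rightarrow> real multiset" where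
  "singular_values M = image_mset sqrt (proots (char_poly (transpose_mat M * M)))"

definition schatten_norm :: "real \<Rightarrow> real mat \<Rightarrow> real" where
  "schatten_norm p M = (\<Sum>\<^sub># (image_mset (\<lambda>s. s powr p) (singular_values M))) powr (1 / p)"

definition upper_trunc :: "real mat \<Rightarrow> real mat" where
  "upper_trunc M = mat (dim_row M) (dim_col M) (\<lambda>(i, j). if i \<le> j then M $$ (i, j) else 0)"

end

theory Submission
  imports Defs "Jordan_Normal_Form.Schur_Decomposition" "HOL-Analysis.Convex"
begin

text \<open>For \<open>p = 2 ^ (k + 1)\<close> the Schatten norm is a trace, \<open>\<parallel>A\<parallel>\<^sub>p\<^sup>p = tr ((A\<^sup>T A) ^ (p / 2))\<close>,
  so everything can be done by matrix algebra. Starting from Cauchy--Schwarz for the Frobenius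
  norm (\<open>k = 0\<close>), induction on \<open>k\<close> gives Hoelder's inequality
  \<open>\<parallel>A B\<parallel>\<^sub>p \<le> \<parallel>A\<parallel>\<^sub>2\<^sub>p \<parallel>B\<parallel>\<^sub>2\<^sub>p\<close> and the triangle inequality.
  For \<open>T = U X\<close> one has \<open>T\<^sup>T T = L Y + U Y\<^sup>T\<close> with \<open>Y = X\<^sup>T T\<close> and \<open>L\<close> the strictly
  lower truncation, and the same shape for \<open>T = L X\<close> with \<open>Y = T\<^sup>T X\<close>. Hence
  \<open>\<parallel>T\<parallel>\<^sub>2\<^sub>p\<^sup>2 = \<parallel>T\<^sup>T T\<parallel>\<^sub>p \<le> 2 c\<^sub>p \<parallel>Y\<parallel>\<^sub>p \<le> 2 c\<^sub>p \<parallel>X\<parallel>\<^sub>2\<^sub>p \<parallel>T\<parallel>\<^sub>2\<^sub>p\<close>, where \<open>c\<^sub>p\<close> bounds both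
  truncations on \<open>S\<^sub>p\<close>; so \<open>c\<^sub>2\<^sub>p \<le> 2 c\<^sub>p\<close>, and \<open>c\<^sub>2 = 1\<close> because truncation only deletes
  entries. The trace formula is matched with the singular-value definition through the
  eigenvalues of \<open>M\<^sup>T M\<close>, which are real and non-negative.\<close>

section \<open>Matrix powers and traces\<close>

lemma pow_mat_add:
  assumes "(A :: 'a :: semiring_1 mat) \<in> carrier_mat n n"
  shows "A ^\<^sub>m (k + l) = A ^\<^sub>m k * A ^\<^sub>m l"
proof (induction l)
  case (Suc l)
  have "A ^\<^sub>m (k + Suc l) = (A ^\<^sub>m k * A ^\<^sub>m l) * A" using Suc by simp
  also have "\<dots> = A ^\<^sub>m k * (A ^\<^sub>m l * A)"
    using assms by (simp add: assoc_mult_mat[of _ n n _ n _ n])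
  finally show ?case by simp
qed (use assms in simp)

lemma pow_mat_mult:
  assumes "(A :: 'a :: semiring_1 mat) \<in> carrier_mat n n"
  shows "A ^\<^sub>m (k * l) = (A ^\<^sub>m k) ^\<^sub>m l"
proof (induction l)
  case (Suc l)
  have "A ^\<^sub>m (k * Suc l) = A ^\<^sub>m (k * l + k)" by (simp add: add.commute)
  then show ?case using pow_mat_add[OF assms] Suc by simp
qed (use assms in simp)

lemma pow_mat_double:
  assumes "(A :: 'a :: semiring_1 mat) \<in> carrier_mat n n"
  shows "A ^\<^sub>m (2 * k) = A ^\<^sub>m k * A ^\<^sub>m k"
  using pow_mat_add[OF assms, of k k] by (simp add: mult_2)

lemma transpose_pow_mat:
  assumes "(A :: 'a :: comm_semiring_1 mat) \<in> carrier_mat n n"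
  shows "transpose_mat (A ^\<^sub>m k) = transpose_mat A ^\<^sub>m k"
proof (induction k)
  case (Suc k)
  have "transpose_mat (A ^\<^sub>m Suc k) = transpose_mat A * transpose_mat A ^\<^sub>m k"
    using assms Suc by (simp add: transpose_mult[of _ n n _ n])
  also have "\<dots> = transpose_mat A ^\<^sub>m (1 + k)"
    using pow_mat_add[of "transpose_mat A" n 1 k] assms by simp
  finally show ?case by simp
qed (use assms in simp)

lemma pow_mat_mult_shift:
  assumes "(A :: 'a :: semiring_1 mat) \<in> carrier_mat n n" "B \<in> carrier_mat n n"
  shows "(A * B) ^\<^sub>m k * A = A * (B * A) ^\<^sub>m k"
proof (induction k)
  case (Suc k)
  have "(A * B) ^\<^sub>m Suc k * A = ((A * B) ^\<^sub>m k * A) * (B * A)"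
    using assms by (simp add: assoc_mult_mat[of _ n n _ n _ n])
  also have "\<dots> = A * ((B * A) ^\<^sub>m k * (B * A))"
    unfolding Suc using assms by (simp add: assoc_mult_mat[of _ n n _ n _ n])
  finally show ?case by simp
qed (use assms in simp)

abbreviation gram :: "'a :: semiring_0 mat \<Rightarrow> 'a mat" where
  "gram A \<equiv> transpose_mat A * A"

definition trace :: "'a :: comm_monoid_add mat \<Rightarrow> 'a" where
  "trace A = (\<Sum>i<dim_row A. A $$ (i, i))"

lemma trace_add:
  "A \<in> carrier_mat n n \<Longrightarrow> B \<in> carrier_mat n n \<Longrightarrow> trace (A + B) = trace A + trace B"
  unfolding trace_def by (simp add: sum.distrib)

lemma trace_mult_eq_sum:
  assumes "(A :: 'a :: comm_semiring_1 mat) \<in> carrier_mat n n" "B \<in> carrier_mat n n"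
  shows "trace (A * B) = (\<Sum>i<n. \<Sum>j<n. A $$ (i, j) * B $$ (j, i))"
  using assms unfolding trace_def by (auto simp: scalar_prod_def atLeast0LessThan)

lemma trace_mult_comm:
  assumes "(A :: 'a :: comm_semiring_1 mat) \<in> carrier_mat n n" "B \<in> carrier_mat n n"
  shows "trace (A * B) = trace (B * A)"
  unfolding trace_mult_eq_sum[OF assms] trace_mult_eq_sum[OF assms(2,1)]
  by (subst sum.swap) (simp add: mult.commute)

lemma trace_pow_mult_comm:
  assumes X: "(X :: 'a :: comm_semiring_1 mat) \<in> carrier_mat n n" and Y: "Y \<in> carrier_mat n n"
  shows "trace ((X * Y) ^\<^sub>m Suc k) = trace ((Y * X) ^\<^sub>m Suc k)"
proof -
  define Z where "Z = (Y * X) ^\<^sub>m k"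
  have Z: "Z \<in> carrier_mat n n" using X Y by (simp add: Z_def)
  have "(X * Y) ^\<^sub>m Suc k = ((X * Y) ^\<^sub>m k * X) * Y"
    using X Y by (simp add: assoc_mult_mat[of _ n n _ n _ n])
  also have "\<dots> = X * (Z * Y)"
    unfolding pow_mat_mult_shift[OF X Y] Z_def
    using X Y by (simp add: assoc_mult_mat[of _ n n _ n _ n])
  finally have "trace ((X * Y) ^\<^sub>m Suc k) = trace ((Z * Y) * X)"
    using trace_mult_comm[OF X, of "Z * Y"] Z Y by simp
  also have "\<dots> = trace (Z * (Y * X))" using Z X Y by (simp add: assoc_mult_mat[of _ n n _ n _ n])
  finally show ?thesis by (simp add: Z_def)
qed

lemma trace_transpose_mult_eq_sum:
  assumes "(X :: 'a :: comm_semiring_1 mat) \<in> carrier_mat n n" "Y \<in> carrier_mat n n"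
  shows "trace (transpose_mat X * Y) = (\<Sum>(i, j) \<in> {..<n} \<times> {..<n}. X $$ (i, j) * Y $$ (i, j))"
proof -
  have "trace (transpose_mat X * Y) = (\<Sum>i<n. \<Sum>j<n. X $$ (j, i) * Y $$ (j, i))"
    using trace_mult_eq_sum[of "transpose_mat X" n Y] assms by simp
  also have "\<dots> = (\<Sum>j<n. \<Sum>i<n. X $$ (j, i) * Y $$ (j, i))" by (rule sum.swap)
  finally show ?thesis by (simp add: sum.cartesian_product)
qed

lemma trace_transpose_mult_sq_le:
  assumes "(X :: real mat) \<in> carrier_mat n n" "Y \<in> carrier_mat n n"
  shows "(trace (transpose_mat X * Y))\<^sup>2 \<le> trace (gram X) * trace (gram Y)"
  unfolding trace_transpose_mult_eq_sum[OF assms] trace_transpose_mult_eq_sum[OF assms(1,1)]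
    trace_transpose_mult_eq_sum[OF assms(2,2)]
  using Cauchy_Schwarz_ineq_sum[of "\<lambda>(i, j). X $$ (i, j)" "\<lambda>(i, j). Y $$ (i, j)"]
  by (simp add: case_prod_beta power2_eq_square)

lemma trace_gram_nonneg: "(X :: real mat) \<in> carrier_mat n n \<Longrightarrow> 0 \<le> trace (gram X)"
  unfolding trace_transpose_mult_eq_sum[of X n X] by (auto intro: sum_nonneg)

section \<open>Schatten norms of dyadic exponent\<close>

text \<open>\<open>schatten_dyadic k\<close> is the Schatten norm of exponent \<open>2 ^ Suc k\<close>, see
  \<open>schatten_norm_eq_schatten_dyadic\<close>; its base case \<open>k = 0\<close> is the Frobenius norm.\<close>

definition schatten_trace :: "nat \<Rightarrow> real mat \<Rightarrow> real" where
  "schatten_trace k A = trace ((gram A) ^\<^sub>m (2 ^ k))"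

definition schatten_dyadic :: "nat \<Rightarrow> real mat \<Rightarrow> real" where
  "schatten_dyadic k A = root (2 ^ Suc k) (schatten_trace k A)"

lemma transpose_gram:
  "(A :: 'a :: comm_semiring_0 mat) \<in> carrier_mat n m \<Longrightarrow> transpose_mat (gram A) = gram A"
  by (simp add: transpose_mult[of "transpose_mat A" m n A m])

lemma schatten_trace_nonneg:
  assumes A: "A \<in> carrier_mat n n"
  shows "0 \<le> schatten_trace k A"
proof (cases k)
  case 0
  then show ?thesis using trace_gram_nonneg[OF A] by (simp add: schatten_trace_def)
next
  case (Suc i)
  define W where "W = (gram A) ^\<^sub>m (2 ^ i)"
  have W: "W \<in> carrier_mat n n" using A by (simp add: W_def)
  have "(gram A) ^\<^sub>m (2 ^ k) = gram W"
    using pow_mat_double[of "gram A" n "2 ^ i"] transpose_pow_mat[of "gram A" n] A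
    by (simp add: Suc W_def transpose_gram[OF A])
  then show ?thesis using trace_gram_nonneg[OF W] by (simp add: schatten_trace_def)
qed

lemma schatten_dyadic_nonneg: "A \<in> carrier_mat n n \<Longrightarrow> 0 \<le> schatten_dyadic k A"
  unfolding schatten_dyadic_def by (simp add: schatten_trace_nonneg)

lemma schatten_dyadic_power:
  "A \<in> carrier_mat n n \<Longrightarrow> schatten_dyadic k A ^ 2 ^ Suc k = schatten_trace k A"
  unfolding schatten_dyadic_def by (simp add: real_root_pow_pos2 schatten_trace_nonneg)

lemma frobenius_sq: "A \<in> carrier_mat n n \<Longrightarrow> schatten_dyadic 0 A ^ 2 = trace (gram A)"
  using schatten_dyadic_power[of A n 0] by (simp add: schatten_trace_def)

lemma schatten_dyadic_le:
  assumes "schatten_trace k A \<le> c ^ 2 ^ Suc k" and "0 \<le> c"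
  shows "schatten_dyadic k A \<le> c"
  using real_root_le_mono[OF _ assms(1), of "2 ^ Suc k"] assms(2)
  by (simp add: schatten_dyadic_def real_root_power_cancel)

lemma schatten_trace_transpose:
  assumes A: "A \<in> carrier_mat n n"
  shows "schatten_trace k (transpose_mat A) = schatten_trace k A"
proof -
  obtain m where m: "(2 :: nat) ^ k = Suc m" using not0_implies_Suc by fastforce
  show ?thesis
    using trace_pow_mult_comm[of A n "transpose_mat A" m] A by (simp add: schatten_trace_def m)
qed

lemma schatten_dyadic_transpose:
  "A \<in> carrier_mat n n \<Longrightarrow> schatten_dyadic k (transpose_mat A) = schatten_dyadic k A"
  unfolding schatten_dyadic_def by (simp add: schatten_trace_transpose)

lemma schatten_trace_gram:
  assumes A: "A \<in> carrier_mat n n"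
  shows "schatten_trace k (gram A) = schatten_trace (Suc k) A"
proof -
  have "gram (gram A) = (gram A) ^\<^sub>m 2"
    using A by (simp add: transpose_gram[OF A] numeral_2_eq_2)
  then show ?thesis
    using pow_mat_mult[of "gram A" n 2 "2 ^ k"] A by (simp add: schatten_trace_def)
qed

lemma schatten_dyadic_gram:
  assumes A: "A \<in> carrier_mat n n"
  shows "schatten_dyadic k (gram A) = schatten_dyadic (Suc k) A ^ 2"
proof -
  define t where "t = schatten_trace (Suc k) A"
  have "root (2 ^ Suc (Suc k)) t = root 2 (root (2 ^ Suc k) t)"
    by (simp only: power_Suc real_root_mult_exp)
  then have "root (2 ^ Suc (Suc k)) t ^ 2 = root (2 ^ Suc k) t"
    using schatten_trace_nonneg[OF A] by (simp add: t_def real_root_pow_pos2)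
  then show ?thesis by (simp add: schatten_dyadic_def schatten_trace_gram[OF A] t_def)
qed

lemma trace_mult_le_frobenius:
  assumes X: "X \<in> carrier_mat n n" and Y: "Y \<in> carrier_mat n n"
  shows "trace (X * Y) \<le> schatten_dyadic 0 X * schatten_dyadic 0 Y"
proof (rule power2_le_imp_le)
  have "(trace (X * Y))\<^sup>2 \<le> trace (gram (transpose_mat X)) * trace (gram Y)"
    using trace_transpose_mult_sq_le[of "transpose_mat X" n Y] X Y by simp
  also have "\<dots> = (schatten_dyadic 0 X * schatten_dyadic 0 Y)\<^sup>2"
    using frobenius_sq[of "transpose_mat X" n] frobenius_sq[OF Y] X
    by (simp add: schatten_dyadic_transpose power_mult_distrib)
  finally show "(trace (X * Y))\<^sup>2 \<le> (schatten_dyadic 0 X * schatten_dyadic 0 Y)\<^sup>2" .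
qed (use X Y in \<open>simp add: schatten_dyadic_nonneg\<close>)

lemma schatten_trace_mult:
  assumes A: "A \<in> carrier_mat n n" and B: "B \<in> carrier_mat n n"
  shows "schatten_trace k (A * B) = trace ((gram A * (B * transpose_mat B)) ^\<^sub>m (2 ^ k))"
proof -
  obtain m where m: "(2 :: nat) ^ k = Suc m" using not0_implies_Suc by fastforce
  have "gram (A * B) = transpose_mat B * (gram A * B)"
    using A B by (simp add: transpose_mult[of _ n n _ n] assoc_mult_mat[of _ n n _ n _ n])
  moreover have "gram A * B * transpose_mat B = gram A * (B * transpose_mat B)"
    using A B by (simp add: assoc_mult_mat[of _ n n _ n _ n])
  ultimately show ?thesis
    using trace_pow_mult_comm[of "transpose_mat B" n "gram A * B" m] A B
    by (simp add: schatten_trace_def m)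
qed

lemma schatten_dyadic_pow_le:
  assumes "\<And>k A B. k < l \<Longrightarrow> A \<in> carrier_mat n n \<Longrightarrow> B \<in> carrier_mat n n \<Longrightarrow>
      schatten_dyadic k (A * B) \<le> schatten_dyadic (Suc k) A * schatten_dyadic (Suc k) B"
    and "C \<in> carrier_mat n n"
  shows "schatten_dyadic 0 (C ^\<^sub>m (2 ^ l)) \<le> schatten_dyadic l C ^ 2 ^ l"
  using assms
proof (induction l arbitrary: C)
  case (Suc l)
  have C: "C \<in> carrier_mat n n" and CC: "C * C \<in> carrier_mat n n" using Suc.prems(2) by auto
  have "C ^\<^sub>m (2 ^ Suc l) = (C * C) ^\<^sub>m (2 ^ l)"
    using pow_mat_mult[OF C, of 2 "2 ^ l"] C by (simp add: numeral_2_eq_2)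
  moreover have "schatten_dyadic 0 ((C * C) ^\<^sub>m (2 ^ l)) \<le> schatten_dyadic l (C * C) ^ 2 ^ l"
    by (rule Suc.IH) (auto intro: Suc.prems(1) simp: CC)
  moreover have "schatten_dyadic l (C * C) ^ 2 ^ l \<le> (schatten_dyadic (Suc l) C ^ 2) ^ 2 ^ l"
    using Suc.prems(1)[of l C C] C CC
    by (intro power_mono) (auto simp: power2_eq_square schatten_dyadic_nonneg[of _ n])
  ultimately show ?case by (simp add: power_mult[symmetric])
qed simp

theorem schatten_dyadic_mult_le:
  assumes "A \<in> carrier_mat n n" "B \<in> carrier_mat n n"
  shows "schatten_dyadic j (A * B) \<le> schatten_dyadic (Suc j) A * schatten_dyadic (Suc j) B"
  using assms
proof (induction j arbitrary: A B rule: less_induct)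
  case (less j)
  note A = less.prems(1) and B = less.prems(2)
  define P Q where "P = gram A" and "Q = B * transpose_mat B"
  have P: "P \<in> carrier_mat n n" and Q: "Q \<in> carrier_mat n n" using A B by (auto simp: P_def Q_def)
  have "trace ((P * Q) ^\<^sub>m (2 ^ j)) \<le> (schatten_dyadic j P * schatten_dyadic j Q) ^ 2 ^ j"
  proof (cases j)
    case 0
    then show ?thesis using trace_mult_le_frobenius[OF P Q] by simp
  next
    case (Suc i)
    define W where "W = (P * Q) ^\<^sub>m (2 ^ i)"
    have W: "W \<in> carrier_mat n n" using P Q by (simp add: W_def)
    have "trace ((P * Q) ^\<^sub>m (2 ^ j)) = trace (W * W)"
      using pow_mat_double[of "P * Q" n "2 ^ i"] P Q by (simp add: Suc W_def)
    also have "\<dots> \<le> schatten_dyadic 0 W ^ 2"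
      using trace_mult_le_frobenius[OF W W] by (simp add: power2_eq_square)
    also have "\<dots> \<le> (schatten_dyadic i (P * Q) ^ 2 ^ i) ^ 2"
      unfolding W_def using P Q
      by (intro power_mono schatten_dyadic_pow_le)
        (auto intro: less.IH simp: Suc schatten_dyadic_nonneg[of _ n])
    also have "\<dots> \<le> ((schatten_dyadic j P * schatten_dyadic j Q) ^ 2 ^ i) ^ 2"
      using less.IH[of i P Q] P Q by (intro power_mono) (auto simp: Suc schatten_dyadic_nonneg[of _ n])
    also have "\<dots> = (schatten_dyadic j P * schatten_dyadic j Q) ^ 2 ^ j"
      by (simp add: Suc power_mult[symmetric] mult.commute)
    finally show ?thesis .
  qed
  also have "schatten_dyadic j P * schatten_dyadic j Q
      = (schatten_dyadic (Suc j) A * schatten_dyadic (Suc j) B) ^ 2"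
    using schatten_dyadic_gram[OF A, of j] schatten_dyadic_gram[of "transpose_mat B" n j] A B
    by (simp add: P_def Q_def schatten_dyadic_transpose power_mult_distrib)
  finally have "schatten_trace j (A * B)
      \<le> (schatten_dyadic (Suc j) A * schatten_dyadic (Suc j) B) ^ 2 ^ Suc j"
    by (simp add: schatten_trace_mult[OF A B] P_def Q_def power_mult[symmetric])
  then show ?case by (rule schatten_dyadic_le) (use A B in \<open>simp add: schatten_dyadic_nonneg\<close>)
qed

lemma gram_add:
  assumes A: "(A :: 'a :: comm_semiring_1 mat) \<in> carrier_mat n n" and B: "B \<in> carrier_mat n n"
  shows "gram (A + B) = gram A + transpose_mat A * B + transpose_mat B * A + gram B"
proof -
  have "gram (A + B) = (transpose_mat A + transpose_mat B) * (A + B)"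
    using transpose_add[OF A B] by simp
  also have "\<dots> = transpose_mat A * (A + B) + transpose_mat B * (A + B)"
    using A B by (intro add_mult_distrib_mat[of _ n n]) auto
  also have "\<dots> = (gram A + transpose_mat A * B) + (transpose_mat B * A + gram B)"
    using A B by (simp add: mult_add_distrib_mat[of _ n n])
  finally show ?thesis using A B by (simp add: assoc_add_mat[of _ n n])
qed

theorem schatten_dyadic_add_le:
  assumes "A \<in> carrier_mat n n" "B \<in> carrier_mat n n"
  shows "schatten_dyadic j (A + B) \<le> schatten_dyadic j A + schatten_dyadic j B"
  using assms
proof (induction j arbitrary: A B)
  case 0
  note A = "0.prems"(1) and B = "0.prems"(2)
  have cross: "trace (transpose_mat A * B) \<le> schatten_dyadic 0 A * schatten_dyadic 0 B"
    "trace (transpose_mat B * A) \<le> schatten_dyadic 0 A * schatten_dyadic 0 B"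
    using trace_mult_le_frobenius[of "transpose_mat A" n B]
      trace_mult_le_frobenius[of "transpose_mat B" n A] A B
    by (simp_all add: schatten_dyadic_transpose mult.commute)
  have "schatten_dyadic 0 (A + B) ^ 2 = trace (gram A) + trace (transpose_mat A * B)
      + trace (transpose_mat B * A) + trace (gram B)"
    using frobenius_sq[of "A + B" n] A B by (simp add: gram_add trace_add[of _ n])
  also have "\<dots> \<le> (schatten_dyadic 0 A + schatten_dyadic 0 B) ^ 2"
    using cross frobenius_sq[OF A] frobenius_sq[OF B] by (simp add: power2_sum)
  finally show ?case by (rule power2_le_imp_le) (use A B in \<open>simp add: schatten_dyadic_nonneg\<close>)
next
  case (Suc j)
  note A = Suc.prems(1) and B = Suc.prems(2)
  let ?nr = "schatten_dyadic j"
  let ?a = "schatten_dyadic (Suc j) A" and ?b = "schatten_dyadic (Suc j) B"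
  have cross: "?nr (transpose_mat A * B) \<le> ?a * ?b" "?nr (transpose_mat B * A) \<le> ?a * ?b"
    using schatten_dyadic_mult_le[of "transpose_mat A" n B j]
      schatten_dyadic_mult_le[of "transpose_mat B" n A j] A B
    by (simp_all add: schatten_dyadic_transpose mult.commute)
  have "schatten_dyadic (Suc j) (A + B) ^ 2
      = ?nr (gram A + transpose_mat A * B + transpose_mat B * A + gram B)"
    using schatten_dyadic_gram[of "A + B" n j] A B by (simp add: gram_add)
  also have "\<dots> \<le> ?nr (gram A) + ?nr (transpose_mat A * B) + ?nr (transpose_mat B * A) + ?nr (gram B)"
    using Suc.IH[of "gram A + transpose_mat A * B + transpose_mat B * A" "gram B"]
      Suc.IH[of "gram A + transpose_mat A * B" "transpose_mat B * A"]
      Suc.IH[of "gram A" "transpose_mat A * B"] A B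
    by simp
  also have "\<dots> \<le> (?a + ?b) ^ 2"
    using cross schatten_dyadic_gram[OF A] schatten_dyadic_gram[OF B]
    by (simp add: power2_sum)
  finally show ?case by (rule power2_le_imp_le) (use A B in \<open>simp add: schatten_dyadic_nonneg\<close>)
qed

section \<open>Triangular truncations\<close>

definition lower_trunc :: "real mat \<Rightarrow> real mat" where
  "lower_trunc M = mat (dim_row M) (dim_col M) (\<lambda>(i, j). if j < i then M $$ (i, j) else 0)"

definition lower_symmetrize :: "real mat \<Rightarrow> real mat" where
  "lower_symmetrize Y = lower_trunc Y + upper_trunc (transpose_mat Y)"

lemma upper_trunc_dim [simp]:
  "dim_row (upper_trunc X) = dim_row X" "dim_col (upper_trunc X) = dim_col X"
  unfolding upper_trunc_def by simp_all

lemma lower_trunc_dim [simp]: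
  "dim_row (lower_trunc X) = dim_row X" "dim_col (lower_trunc X) = dim_col X"
  unfolding lower_trunc_def by simp_all

lemma upper_trunc_carrier [simp]: "X \<in> carrier_mat n m \<Longrightarrow> upper_trunc X \<in> carrier_mat n m"
  by auto

lemma lower_trunc_carrier [simp]: "X \<in> carrier_mat n m \<Longrightarrow> lower_trunc X \<in> carrier_mat n m"
  by auto

lemma upper_trunc_index [simp]:
  "i < dim_row X \<Longrightarrow> j < dim_col X \<Longrightarrow>
    upper_trunc X $$ (i, j) = (if i \<le> j then X $$ (i, j) else 0)"
  unfolding upper_trunc_def by simp

lemma lower_trunc_index [simp]:
  "i < dim_row X \<Longrightarrow> j < dim_col X \<Longrightarrow>
    lower_trunc X $$ (i, j) = (if j < i then X $$ (i, j) else 0)"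
  unfolding lower_trunc_def by simp

lemma index_transpose_mult:
  assumes "(X :: 'a :: comm_semiring_0 mat) \<in> carrier_mat n n" "Y \<in> carrier_mat n n"
    and "i < n" "k < n"
  shows "(transpose_mat X * Y) $$ (i, k) = (\<Sum>l<n. X $$ (l, i) * Y $$ (l, k))"
  using assms by (simp add: scalar_prod_def atLeast0LessThan)

lemma gram_eq_lower_symmetrize:
  assumes T: "T \<in> carrier_mat n n" and Y: "Y \<in> carrier_mat n n"
    and lower: "\<And>i k. k \<le> i \<Longrightarrow> i < n \<Longrightarrow> gram T $$ (i, k) = Y $$ (i, k)"
  shows "gram T = lower_symmetrize Y"
proof (rule eq_matI)
  fix i k assume "i < dim_row (lower_symmetrize Y)" "k < dim_col (lower_symmetrize Y)"
  then have i: "i < n" and k: "k < n" using Y by (auto simp: lower_symmetrize_def)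
  show "gram T $$ (i, k) = lower_symmetrize Y $$ (i, k)"
  proof (cases "k \<le> i")
    case True
    then show ?thesis using lower[OF True i] i k Y by (simp add: lower_symmetrize_def)
  next
    case False
    have "gram T $$ (i, k) = transpose_mat (gram T) $$ (k, i)" using T i k by simp
    also have "\<dots> = Y $$ (k, i)" using lower[of i k] False k by (simp add: transpose_gram[OF T])
    finally show ?thesis using False i k Y by (simp add: lower_symmetrize_def)
  qed
qed (use T Y in \<open>simp_all add: lower_symmetrize_def\<close>)

text \<open>In both identities only the entries on and below the diagonal need checking: a
  nonzero summand \<open>T\<^sub>l\<^sub>i T\<^sub>l\<^sub>k\<close> with \<open>k \<le> i\<close> has \<open>l \<le> k\<close> resp. \<open>l > i\<close>, so one of the
  two truncated factors may be replaced by the entry of \<open>X\<close>.\<close>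

lemma gram_upper_trunc:
  assumes X: "X \<in> carrier_mat n n"
  shows "gram (upper_trunc X) = lower_symmetrize (transpose_mat X * upper_trunc X)"
proof (rule gram_eq_lower_symmetrize[of _ n])
  fix i k assume ki: "k \<le> i" and i: "i < n"
  then have k: "k < n" by simp
  have T: "upper_trunc X \<in> carrier_mat n n" using X by simp
  show "gram (upper_trunc X) $$ (i, k) = (transpose_mat X * upper_trunc X) $$ (i, k)"
    unfolding index_transpose_mult[OF T T i k] index_transpose_mult[OF X T i k]
    using ki i X by (auto intro!: sum.cong)
qed (use X in simp_all)

lemma gram_lower_trunc:
  assumes X: "X \<in> carrier_mat n n"
  shows "gram (lower_trunc X) = lower_symmetrize (transpose_mat (lower_trunc X) * X)"
proof (rule gram_eq_lower_symmetrize[of _ n])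
  fix i k assume ki: "k \<le> i" and i: "i < n"
  then have k: "k < n" by simp
  have T: "lower_trunc X \<in> carrier_mat n n" using X by simp
  show "gram (lower_trunc X) $$ (i, k) = (transpose_mat (lower_trunc X) * X) $$ (i, k)"
    unfolding index_transpose_mult[OF T T i k] index_transpose_mult[OF T X i k]
    using ki i X by (auto intro!: sum.cong)
qed (use X in \<open>auto intro!: mult_carrier_mat\<close>)

lemma frobenius_mono:
  assumes X: "X \<in> carrier_mat n n" and Z: "Z \<in> carrier_mat n n"
    and le: "\<And>i j. i < n \<Longrightarrow> j < n \<Longrightarrow> (Z $$ (i, j))\<^sup>2 \<le> (X $$ (i, j))\<^sup>2"
  shows "schatten_dyadic 0 Z \<le> schatten_dyadic 0 X"
proof (rule power2_le_imp_le)
  show "(schatten_dyadic 0 Z)\<^sup>2 \<le> (schatten_dyadic 0 X)\<^sup>2"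
    unfolding frobenius_sq[OF X] frobenius_sq[OF Z]
      trace_transpose_mult_eq_sum[OF X X] trace_transpose_mult_eq_sum[OF Z Z]
    by (intro sum_mono) (auto simp: le power2_eq_square[symmetric])
qed (rule schatten_dyadic_nonneg[OF X])

theorem schatten_dyadic_trunc_le:
  assumes "X \<in> carrier_mat n n"
  shows "schatten_dyadic j (upper_trunc X) \<le> 2 ^ j * schatten_dyadic j X
    \<and> schatten_dyadic j (lower_trunc X) \<le> 2 ^ j * schatten_dyadic j X"
  using assms
proof (induction j arbitrary: X)
  case 0
  then show ?case by (auto intro!: frobenius_mono[of _ n])
next
  case (Suc j)
  note X = Suc.prems
  have L: "lower_trunc X \<in> carrier_mat n n" using X by simp
  let ?nr = "schatten_dyadic (Suc j)"
  have symmetrize: "schatten_dyadic j (lower_symmetrize Y) \<le> 2 ^ Suc j * schatten_dyadic j Y"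
    if Y: "Y \<in> carrier_mat n n" for Y
  proof -
    have "schatten_dyadic j (lower_symmetrize Y)
        \<le> schatten_dyadic j (lower_trunc Y) + schatten_dyadic j (upper_trunc (transpose_mat Y))"
      unfolding lower_symmetrize_def using Y by (intro schatten_dyadic_add_le[of _ n]) auto
    also have "\<dots> \<le> 2 ^ j * schatten_dyadic j Y + 2 ^ j * schatten_dyadic j (transpose_mat Y)"
      using Suc.IH[OF Y] Suc.IH[of "transpose_mat Y"] Y by (intro add_mono) auto
    finally show ?thesis by (simp add: schatten_dyadic_transpose[OF Y] algebra_simps)
  qed
  have step: "?nr T \<le> 2 ^ Suc j * ?nr X"
    if T: "T \<in> carrier_mat n n" and Y: "Y \<in> carrier_mat n n"
      and gram: "gram T = lower_symmetrize Y" and holder: "schatten_dyadic j Y \<le> ?nr X * ?nr T" for T Y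
  proof (cases "?nr T = 0")
    case False
    have "?nr T * ?nr T = schatten_dyadic j (lower_symmetrize Y)"
      using schatten_dyadic_gram[OF T, of j] gram by (simp add: power2_eq_square)
    also have "\<dots> \<le> 2 ^ Suc j * schatten_dyadic j Y" by (rule symmetrize[OF Y])
    also have "\<dots> \<le> (2 ^ Suc j * ?nr X) * ?nr T" using holder by (simp add: mult.assoc)
    finally show ?thesis
      by (rule mult_right_le_imp_le) (use False schatten_dyadic_nonneg[OF T, of "Suc j"] in linarith)
  qed (use X in \<open>simp add: schatten_dyadic_nonneg\<close>)
  have "?nr (upper_trunc X) \<le> 2 ^ Suc j * ?nr X"
    using schatten_dyadic_mult_le[of "transpose_mat X" n "upper_trunc X" j] X
    by (intro step[OF _ _ gram_upper_trunc[OF X]]) (simp_all add: schatten_dyadic_transpose)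
  moreover have "?nr (lower_trunc X) \<le> 2 ^ Suc j * ?nr X"
    using schatten_dyadic_mult_le[of "transpose_mat (lower_trunc X)" n X j] X L
    by (intro step[OF L _ gram_lower_trunc[OF X]] mult_carrier_mat[of _ n n])
      (simp_all add: schatten_dyadic_transpose[OF L] mult.commute)
  ultimately show ?case ..
qed

section \<open>Traces of powers and singular values\<close>

lemma upper_triangular_mult:
  assumes X: "(X :: 'a :: semiring_0 mat) \<in> carrier_mat n n" and Y: "Y \<in> carrier_mat n n"
    and "upper_triangular X" "upper_triangular Y"
  shows "upper_triangular (X * Y)"
proof (rule upper_triangularI)
  fix i j assume ji: "j < i" and "i < dim_row (X * Y)"
  then have i: "i < n" using X by simp
  have "X $$ (i, l) * Y $$ (l, j) = 0" if l: "l < n" for l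
  proof (cases "l < i")
    case True
    then show ?thesis using upper_triangularD[OF assms(3) True] X i by simp
  next
    case False
    then have "j < l" using ji by simp
    then show ?thesis using upper_triangularD[OF assms(4) \<open>j < l\<close>] Y l by simp
  qed
  then show "(X * Y) $$ (i, j) = 0"
    using X Y i ji by (simp add: scalar_prod_def atLeast0LessThan)
qed

lemma diag_upper_triangular_mult:
  assumes X: "(X :: 'a :: semiring_0 mat) \<in> carrier_mat n n" and Y: "Y \<in> carrier_mat n n"
    and "upper_triangular X" "upper_triangular Y" and i: "i < n"
  shows "(X * Y) $$ (i, i) = X $$ (i, i) * Y $$ (i, i)"
proof -
  have off_diag: "X $$ (i, l) * Y $$ (l, i) = 0" if l: "l < n" "l \<noteq> i" for l
  proof (cases "l < i")
    case True
    then show ?thesis using upper_triangularD[OF assms(3) True] X i by simp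
  next
    case False
    then have "i < l" using l by simp
    then show ?thesis using upper_triangularD[OF assms(4) \<open>i < l\<close>] Y l by simp
  qed
  have "(X * Y) $$ (i, i) = (\<Sum>l<n. X $$ (i, l) * Y $$ (l, i))"
    using X Y i by (simp add: scalar_prod_def atLeast0LessThan)
  also have "\<dots> = X $$ (i, i) * Y $$ (i, i)"
    using i off_diag by (subst sum.remove[of _ i]) (auto intro!: sum.neutral)
  finally show ?thesis .
qed

lemma upper_triangular_pow_mat:
  assumes B: "(B :: 'a :: semiring_1 mat) \<in> carrier_mat n n" and "upper_triangular B"
  shows "upper_triangular (B ^\<^sub>m k)"
  by (induction k) (use assms in \<open>auto intro: upper_triangular_mult[of _ n]\<close>)

lemma diag_upper_triangular_pow_mat:
  assumes B: "(B :: 'a :: semiring_1 mat) \<in> carrier_mat n n" and "upper_triangular B"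
    and "i < n"
  shows "(B ^\<^sub>m k) $$ (i, i) = B $$ (i, i) ^ k"
proof (induction k)
  case (Suc k)
  have "(B ^\<^sub>m Suc k) $$ (i, i) = (B ^\<^sub>m k) $$ (i, i) * B $$ (i, i)"
    unfolding pow_mat.simps
    by (rule diag_upper_triangular_mult[of _ n])
      (use assms in \<open>auto intro: upper_triangular_pow_mat\<close>)
  then show ?case by (simp only: Suc.IH power_Suc2)
qed (use assms in simp)

lemma trace_pow_mat_eq_sum_eigenvalues:
  assumes S: "(S :: 'a :: conjugatable_ordered_field mat) \<in> carrier_mat n n"
    and char_poly: "char_poly S = (\<Prod>e\<leftarrow>es. [:- e, 1:])"
  shows "trace (S ^\<^sub>m k) = (\<Sum>e\<leftarrow>es. e ^ k)"
proof -
  obtain B P Q where schur: "schur_decomposition S es = (B, P, Q)"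
    by (cases "schur_decomposition S es") auto
  from schur_decomposition[OF S char_poly schur]
  have sim: "similar_mat_wit S B P Q" and B_ut: "upper_triangular B" and diag: "diag_mat B = es"
    by auto
  from similar_mat_witD2[OF S sim]
  have B: "B \<in> carrier_mat n n" and P: "P \<in> carrier_mat n n" and Q: "Q \<in> carrier_mat n n"
    and QP: "Q * P = 1\<^sub>m n" by auto
  have "trace (S ^\<^sub>m k) = trace ((P * B ^\<^sub>m k) * Q)"
    using similar_mat_wit_pow_id[OF sim] by simp
  also have "\<dots> = trace ((Q * P) * B ^\<^sub>m k)"
    using trace_mult_comm[of "P * B ^\<^sub>m k" n Q] P B Q
    by (simp add: assoc_mult_mat[of _ n n _ n _ n])
  also have "\<dots> = (\<Sum>i<n. B $$ (i, i) ^ k)"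
    using B by (simp add: QP trace_def diag_upper_triangular_pow_mat[OF B B_ut])
  also have "\<dots> = (\<Sum>e\<leftarrow>diag_mat B. e ^ k)"
    using B by (simp add: diag_mat_def sum_list_sum_nth atLeast0LessThan)
  finally show ?thesis by (simp add: diag)
qed

lemma real_symmetric_eigenvalue_real:
  assumes S: "S \<in> carrier_mat n n" and sym: "transpose_mat S = S"
    and "eigenvalue (map_mat complex_of_real S) a"
  shows "Im a = 0"
proof -
  obtain v where v: "v \<in> carrier_vec n" and v0: "v \<noteq> 0\<^sub>v n"
    and Sv: "map_mat complex_of_real S *\<^sub>v v = a \<cdot>\<^sub>v v"
    using assms unfolding eigenvalue_def eigenvector_def by auto
  have row: "(\<Sum>j<n. of_real (S $$ (i, j)) * v $ j) = a * v $ i" if "i < n" for i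
    using arg_cong[OF Sv, of "\<lambda>w. w $ i"] that v S by (simp add: scalar_prod_def atLeast0LessThan)
  define N where "N = (\<Sum>i<n. cnj (v $ i) * v $ i)"
  \<comment> \<open>\<open>s = v\<^sup>* S v\<close> equals \<open>a N\<close> and is real, while \<open>N > 0\<close>.\<close>
  define s where "s = (\<Sum>i<n. \<Sum>j<n. cnj (v $ i) * (of_real (S $$ (i, j)) * v $ j))"
  have "s = (\<Sum>i<n. cnj (v $ i) * (a * v $ i))"
    unfolding s_def by (intro sum.cong refl) (simp add: sum_distrib_left[symmetric] row)
  then have s_eq: "s = a * N" by (simp add: N_def sum_distrib_left mult_ac)
  have S_sym: "S $$ (i, j) = S $$ (j, i)" if "i < n" "j < n" for i j
    using sym that S by (metis carrier_matD index_transpose_mat(1))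
  have "cnj s = (\<Sum>i<n. \<Sum>j<n. v $ i * (of_real (S $$ (i, j)) * cnj (v $ j)))"
    unfolding s_def by simp
  also have "\<dots> = (\<Sum>j<n. \<Sum>i<n. v $ i * (of_real (S $$ (i, j)) * cnj (v $ j)))"
    by (rule sum.swap)
  also have "\<dots> = s"
    unfolding s_def by (intro sum.cong refl) (simp add: S_sym mult_ac)
  finally have "Im s = 0" by (simp add: complex_eq_iff)
  moreover have "0 < N"
    using conjugate_square_greater_0_vec[OF v] v0 v
    by (simp add: N_def scalar_prod_def atLeast0LessThan mult.commute)
  ultimately show ?thesis by (simp add: s_eq less_complex_def)
qed

lemma poly_prod_linear_factors_root:
  "e \<in> set es \<Longrightarrow> poly (\<Prod>x\<leftarrow>es. [:- x, 1:]) (e :: 'a :: comm_ring_1) = 0"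
  by (induction es) (auto simp: poly_prod_list)

interpretation of_real_poly_hom: map_poly_inj_idom_hom "of_real :: real \<Rightarrow> complex" ..

lemma real_symmetric_char_poly_splits:
  assumes S: "(S :: real mat) \<in> carrier_mat n n" and sym: "transpose_mat S = S"
  obtains es where "char_poly S = (\<Prod>e\<leftarrow>es. [:- e, 1:])"
proof -
  let ?Sc = "map_mat complex_of_real S"
  have Sc: "?Sc \<in> carrier_mat n n" using S by simp
  obtain as where as: "char_poly ?Sc = (\<Prod>a\<leftarrow>as. [:- a, 1:])"
    using char_poly_factorized[OF Sc] by auto
  have real: "a = of_real (Re a)" if "a \<in> set as" for a
  proof -
    have "poly (char_poly ?Sc) a = 0"
      unfolding as using that by (rule poly_prod_linear_factors_root)
    then have "Im a = 0"
      using real_symmetric_eigenvalue_real[OF S sym] eigenvalue_root_char_poly[OF Sc] by simp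
    then show ?thesis by (simp add: complex_eq_iff)
  qed
  have "map_poly complex_of_real (char_poly S) = char_poly ?Sc"
    by (rule of_real_hom.char_poly_hom[OF S, symmetric])
  also have "\<dots> = (\<Prod>a\<leftarrow>as. [:- of_real (Re a), 1:])"
    unfolding as by (intro arg_cong[where f = prod_list] map_cong refl) (metis real)
  also have "\<dots> = map_poly complex_of_real (\<Prod>e\<leftarrow>map Re as. [:- e, 1:])"
    by (simp add: of_real_poly_hom.hom_prod_list o_def)
  finally have "char_poly S = (\<Prod>e\<leftarrow>map Re as. [:- e, 1:])"
    by (simp only: of_real_poly_hom.eq_iff)
  then show ?thesis by (rule that)
qed

lemma gram_char_poly_root_nonneg:
  assumes M: "(M :: real mat) \<in> carrier_mat n n" and e: "poly (char_poly (gram M)) e = 0"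
  shows "0 \<le> e"
proof -
  have S: "gram M \<in> carrier_mat n n" using M by simp
  have "eigenvalue (gram M) e" using eigenvalue_root_char_poly[OF S] e by simp
  then obtain v where v: "v \<in> carrier_vec n" and v0: "v \<noteq> 0\<^sub>v n"
    and Sv: "gram M *\<^sub>v v = e \<cdot>\<^sub>v v"
    using S unfolding eigenvalue_def eigenvector_def by (auto simp del: assoc_mult_mat_vec)
  have "e * (v \<bullet> v) = (transpose_mat M *\<^sub>v (M *\<^sub>v v)) \<bullet> v"
    using Sv M v by simp
  also have "\<dots> = (M *\<^sub>v v) \<bullet> (M *\<^sub>v v)"
    using transpose_vec_mult_scalar[OF M v, of "M *\<^sub>v v"] M v by simp
  finally have "0 \<le> e * (v \<bullet> v)"
    using conjugate_square_ge_0_vec[of "M *\<^sub>v v"] by simp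
  moreover have "0 < v \<bullet> v" using conjugate_square_greater_0_vec[OF v] v0 by simp
  ultimately show ?thesis by (simp add: zero_le_mult_iff)
qed

lemma proots_prod_linear_factors: "proots (\<Prod>e\<leftarrow>es. [:- e, 1:]) = mset (es :: 'a :: idom list)"
proof (induction es)
  case (Cons e es)
  have nonzero: "(\<Prod>e\<leftarrow>es. [:- e, 1:]) \<noteq> (0 :: 'a poly)"
    by (auto simp: prod_list_zero_iff)
  have "proots (\<Prod>e\<leftarrow>e # es. [:- e, 1:])
      = proots [:- e, 1:] + proots (\<Prod>e\<leftarrow>es. [:- e, 1:])"
    unfolding prod_list.Cons list.map by (rule proots_mult) (use nonzero in simp_all)
  then show ?case using Cons.IH by simp
qed simp

lemma sqrt_powr_two_power:
  assumes "0 \<le> (x :: real)"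
  shows "sqrt x powr (2 ^ Suc k) = x ^ 2 ^ k"
proof (cases "x = 0")
  case False
  then have "sqrt x powr (2 ^ Suc k) = sqrt x ^ (2 * 2 ^ k)"
    using assms powr_realpow[of "sqrt x" "2 ^ Suc k"] by simp
  also have "\<dots> = x ^ 2 ^ k" using assms by (simp add: power_mult)
  finally show ?thesis .
qed simp

theorem schatten_norm_eq_schatten_dyadic:
  assumes M: "M \<in> carrier_mat n n"
  shows "schatten_norm (2 ^ Suc k) M = schatten_dyadic k M"
proof -
  have S: "gram M \<in> carrier_mat n n" using M by simp
  obtain es where es: "char_poly (gram M) = (\<Prod>e\<leftarrow>es. [:- e, 1:])"
    using real_symmetric_char_poly_splits[OF S transpose_gram[OF M]] .
  have nonneg: "0 \<le> e" if "e \<in> set es" for e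
    using gram_char_poly_root_nonneg[OF M] poly_prod_linear_factors_root[OF that] es by simp
  have "singular_values M = mset (map sqrt es)"
    by (simp add: singular_values_def es proots_prod_linear_factors)
  then have "(\<Sum>\<^sub># (image_mset (\<lambda>s. s powr 2 ^ Suc k) (singular_values M)))
      = (\<Sum>e\<leftarrow>es. sqrt e powr 2 ^ Suc k)"
    by (simp only: mset_map[symmetric] map_map sum_mset_sum_list o_def)
  also have "\<dots> = (\<Sum>e\<leftarrow>es. e ^ 2 ^ k)"
    by (intro arg_cong[where f = sum_list] map_cong refl sqrt_powr_two_power nonneg)
  also have "\<dots> = schatten_trace k M"
    by (simp add: schatten_trace_def trace_pow_mat_eq_sum_eigenvalues[OF S es])
  finally show ?thesis
    using schatten_trace_nonneg[OF M, of k]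
    by (simp add: schatten_norm_def schatten_dyadic_def root_powr_inverse)
qed

theorem mainTheorem5:
  fixes j n :: nat and M :: "real mat"
  assumes "j \<ge> 1" and "M \<in> carrier_mat n n"
  shows "schatten_norm (2 ^ j) (upper_trunc M) \<le> 2 ^ (j - 1) * schatten_norm (2 ^ j) M"
proof -
  obtain k where j: "j = Suc k" using assms(1) by (cases j) auto
  have "schatten_norm (2 ^ j) (upper_trunc M) = schatten_dyadic k (upper_trunc M)"
    using schatten_norm_eq_schatten_dyadic[of "upper_trunc M" n k] assms(2) by (simp add: j)
  also have "\<dots> \<le> 2 ^ k * schatten_dyadic k M"
    using schatten_dyadic_trunc_le[OF assms(2)] by blast
  also have "\<dots> = 2 ^ (j - 1) * schatten_norm (2 ^ j) M"
    using schatten_norm_eq_schatten_dyadic[OF assms(2)] by (simp add: j)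
  finally show ?thesis .
qed

end
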